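(* Let $G$ be a locally nilpotent group which is not periodic. Then $G$ contains no finite contranormal subgroups.
   Context: A subgroup $H$ of $G$ is contranormal in $G$ if its normal closure $H^G$ equals $G$. *)

theory Defs
  imports "HOL-Algebra.Algebra"
begin

definition commutator_subgroup :: "('a, 'b) monoid_scheme \<Rightarrow> 'a set \<Rightarrow> 'a set \<Rightarrow> 'a set" where
  "commutator_subgroup G H K =
     generate G {h \<otimes>\<^bsub>G\<^esub> k \<otimes>\<^bsub>G\<^esub> inv\<^bsub>G\<^esub> h \<otimes>\<^bsub>G\<^esub> inv\<^bsub>G\<^esub> k | h k. h \<in> H \<and> k \<in> K}"

text \<open>Lower central series: gamma_1 = G (index 0 here), gamma_(i+1) = [gamma_i, G].\<close>
fun lower_central :: "('a, 'b) monoid_scheme \<Rightarrow> nat \<Rightarrow> 'a set" where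
  "lower_central G 0 = carrier G"
| "lower_central G (Suc n) = commutator_subgroup G (lower_central G n) (carrier G)"

definition nilpotent_group :: "('a, 'b) monoid_scheme \<Rightarrow> bool" where
  "nilpotent_group G \<longleftrightarrow> group G \<and> (\<exists>n. lower_central G n = {\<one>\<^bsub>G\<^esub>})"

definition locally_nilpotent :: "('a, 'b) monoid_scheme \<Rightarrow> bool" where
  "locally_nilpotent G \<longleftrightarrow> group G \<and>
     (\<forall>S. finite S \<and> S \<subseteq> carrier G \<longrightarrow> nilpotent_group (subgroup_generated G S))"

definition periodic_group :: "('a, 'b) monoid_scheme \<Rightarrow> bool" where
  "periodic_group G \<longleftrightarrow> (\<forall>x \<in> carrier G. \<exists>n::nat. n > 0 \<and> x [^]\<^bsub>G\<^esub> n = \<one>\<^bsub>G\<^esub>)"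

definition normal_closure :: "('a, 'b) monoid_scheme \<Rightarrow> 'a set \<Rightarrow> 'a set" where
  "normal_closure G H = \<Inter> {N. N \<lhd> G \<and> H \<subseteq> N}"

definition contranormal :: "'a set \<Rightarrow> ('a, 'b) monoid_scheme \<Rightarrow> bool" where
  "contranormal H G \<longleftrightarrow> subgroup H G \<and> normal_closure G H = carrier G"

end

theory Submission
  imports Defs
begin

text \<open>
  In a nilpotent group \<open>G\<close> with lower central series \<open>\<gamma>\<^sub>i\<close>, every subgroup \<open>H\<close> is
  subnormal: \<open>H = \<gamma>\<^sub>m H \<unlhd> \<dots> \<unlhd> \<gamma>\<^sub>1 H \<unlhd> \<gamma>\<^sub>0 H = G\<close>. If \<open>H\<close> is periodic, walk up this
  series: the normal closure of \<open>H\<close> in a term is generated by the conjugates of the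
  normal closure in the next term, which is periodic by induction, and these conjugates
  are periodic normal subgroups of that next term. A product of two periodic normal
  subgroups is periodic, so the normal closure of \<open>H\<close> in \<open>G\<close> is periodic. Applied to
  cyclic subgroups, this shows that the torsion elements of a nilpotent group, and hence
  of a locally nilpotent group, form a normal subgroup. A finite subgroup lies in it, and
  so does its normal closure; a contranormal finite subgroup would make \<open>G\<close> periodic.
\<close>

definition torsion_elements :: "('a, 'b) monoid_scheme \<Rightarrow> 'a set" where
  "torsion_elements G = {x \<in> carrier G. \<exists>n::nat. n > 0 \<and> x [^]\<^bsub>G\<^esub> n = \<one>\<^bsub>G\<^esub>}"

definition conjugates :: "('a, 'b) monoid_scheme \<Rightarrow> 'a set \<Rightarrow> 'a set \<Rightarrow> 'a set" where
  "conjugates G S A = {x \<otimes>\<^bsub>G\<^esub> a \<otimes>\<^bsub>G\<^esub> inv\<^bsub>G\<^esub> x | x a. x \<in> S \<and> a \<in> A}"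

text \<open>\<open>A\<close> is a normal subgroup of the subgroup \<open>N\<close>, phrased inside \<open>G\<close> so that no group
  with restricted carrier is needed.\<close>

definition normal_in :: "('a, 'b) monoid_scheme \<Rightarrow> 'a set \<Rightarrow> 'a set \<Rightarrow> bool" where
  "normal_in G A N \<longleftrightarrow> subgroup A G \<and> A \<subseteq> N \<and> conjugates G N A \<subseteq> A"

lemma decreasing_chain_subset:
  assumes "\<forall>i<c. A (Suc i) \<subseteq> A i"
  shows "A c \<subseteq> A 0"
  using assms by (induction c) auto

context group
begin

lemma inv_mult_cancel_left [simp]:
  "x \<in> carrier G \<Longrightarrow> y \<in> carrier G \<Longrightarrow> inv x \<otimes> (x \<otimes> y) = y"
  by (simp add: m_assoc [symmetric])

lemma mult_inv_cancel_left [simp]: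
  "x \<in> carrier G \<Longrightarrow> y \<in> carrier G \<Longrightarrow> x \<otimes> (inv x \<otimes> y) = y"
  by (simp add: m_assoc [symmetric])

lemma conjugation_group_hom:
  assumes "x \<in> carrier G"
  shows "group_hom G G (\<lambda>a. x \<otimes> a \<otimes> inv x)"
  using assms
  by (auto intro!: homI simp: group_hom_def group_hom_axioms_def is_group m_assoc)

lemma conjugates_singleton_image: "conjugates G {x} A = (\<lambda>a. x \<otimes> a \<otimes> inv x) ` A"
  unfolding conjugates_def by blast

lemma conjugates_eq_UN: "conjugates G S A = (\<Union>x\<in>S. conjugates G {x} A)"
  unfolding conjugates_def by blast

lemma conjugates_subset_carrier:
  "S \<subseteq> carrier G \<Longrightarrow> A \<subseteq> carrier G \<Longrightarrow> conjugates G S A \<subseteq> carrier G"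
  unfolding conjugates_def by auto

lemma subset_conjugates:
  assumes "\<one> \<in> S" "A \<subseteq> carrier G"
  shows "A \<subseteq> conjugates G S A"
proof
  fix a assume "a \<in> A"
  then have "a = \<one> \<otimes> a \<otimes> inv \<one>" using assms(2) by auto
  then show "a \<in> conjugates G S A" using assms(1) \<open>a \<in> A\<close> unfolding conjugates_def by blast
qed

lemma conjugates_subgroup_subset:
  assumes "subgroup N G" "S \<subseteq> N" "A \<subseteq> N"
  shows "conjugates G S A \<subseteq> N"
  using assms unfolding conjugates_def
  by (auto intro!: subgroup.m_closed subgroup.m_inv_closed)

lemma conjugates_conjugates_subset:
  assumes N: "subgroup N G" and A: "A \<subseteq> carrier G"
  shows "conjugates G N (conjugates G N A) \<subseteq> conjugates G N A"
proof
  fix v assume "v \<in> conjugates G N (conjugates G N A)"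
  then obtain y x a where v: "y \<in> N" "x \<in> N" "a \<in> A" "v = y \<otimes> (x \<otimes> a \<otimes> inv x) \<otimes> inv y"
    unfolding conjugates_def by blast
  have "y \<in> carrier G" "x \<in> carrier G" "a \<in> carrier G"
    using v A subgroup.subset[OF N] by auto
  then have "v = (y \<otimes> x) \<otimes> a \<otimes> inv (y \<otimes> x)"
    using v(4) by (simp add: m_assoc inv_mult_group)
  moreover have "y \<otimes> x \<in> N" using v by (simp add: subgroup.m_closed[OF N])
  ultimately show "v \<in> conjugates G N A" using v(3) unfolding conjugates_def by blast
qed

lemma subgroup_conjugates_singleton:
  assumes "subgroup H G" "x \<in> carrier G"
  shows "subgroup (conjugates G {x} H) G"
  unfolding conjugates_singleton_image
  using group_hom.subgroup_img_is_subgroup[OF conjugation_group_hom[OF assms(2)] assms(1)] .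

lemma conjugates_singleton_generate:
  assumes "x \<in> carrier G" "U \<subseteq> carrier G"
  shows "conjugates G {x} (generate G U) = generate G (conjugates G {x} U)"
  unfolding conjugates_singleton_image
  using group_hom.generate_img[OF conjugation_group_hom[OF assms(1)] assms(2)] by simp

lemma one_torsion: "\<one> \<in> torsion_elements G"
  unfolding torsion_elements_def by (auto intro: exI[of _ 1])

lemma conjugates_torsion:
  assumes "S \<subseteq> carrier G" "A \<subseteq> torsion_elements G"
  shows "conjugates G S A \<subseteq> torsion_elements G"
proof
  fix v assume "v \<in> conjugates G S A"
  then obtain x a where v: "x \<in> S" "a \<in> A" "v = x \<otimes> a \<otimes> inv x"
    unfolding conjugates_def by blast
  obtain n :: nat where n: "n > 0" "a [^] n = \<one>" and aG: "a \<in> carrier G"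
    using assms(2) v(2) unfolding torsion_elements_def by blast
  have xG: "x \<in> carrier G" using assms(1) v(1) by blast
  have "v [^] n = x \<otimes> a [^] n \<otimes> inv x"
    using group_hom.hom_nat_pow[OF conjugation_group_hom[OF xG] aG, of n] v(3) by simp
  then show "v \<in> torsion_elements G"
    using n xG aG v(3) unfolding torsion_elements_def by auto
qed

lemma finite_subgroup_torsion:
  assumes H: "subgroup H G" "finite H"
  shows "H \<subseteq> torsion_elements G"
proof
  fix x assume x: "x \<in> H"
  then have xG: "x \<in> carrier G" using subgroup.mem_carrier[OF H(1)] by blast
  have "carrier (subgroup_generated G {x}) \<subseteq> H"
    using subgroup_generated_minimal[OF H(1)] x by blast
  then have "ord x \<noteq> 0"
    using finite_cyclic_subgroup_order[OF xG] finite_subset H(2) by blast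
  then show "x \<in> torsion_elements G"
    unfolding torsion_elements_def using xG by (auto intro!: exI[of _ "ord x"])
qed

lemma cyclic_subgroup_torsion:
  assumes "x \<in> torsion_elements G"
  shows "carrier (subgroup_generated G {x}) \<subseteq> torsion_elements G"
proof -
  obtain n :: nat where x: "x \<in> carrier G" "n > 0" "x [^] n = \<one>"
    using assms unfolding torsion_elements_def by blast
  then have "ord x \<noteq> 0" by (auto simp: ord_eq_0)
  then have "finite (carrier (subgroup_generated G {x}))"
    using finite_cyclic_subgroup_order[OF x(1)] by blast
  then show ?thesis by (intro finite_subgroup_torsion subgroup_subgroup_generated)
qed

lemma normal_inD:
  assumes "normal_in G A N" "x \<in> N" "a \<in> A"
  shows "x \<otimes> a \<otimes> inv x \<in> A"
  using assms unfolding normal_in_def conjugates_def by blast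

lemma normal_in_trivial:
  assumes "subgroup N G"
  shows "normal_in G {\<one>} N"
  using assms subgroup.mem_carrier[OF assms]
  by (auto simp: normal_in_def conjugates_def triv_subgroup subgroup.one_closed)

lemma generate_normal_in:
  assumes N: "subgroup N G" and U: "U \<subseteq> N" and stable: "conjugates G N U \<subseteq> U"
  shows "normal_in G (generate G U) N"
proof -
  have NG: "N \<subseteq> carrier G" and UG: "U \<subseteq> carrier G"
    using subgroup.subset[OF N] U by auto
  have "conjugates G {x} (generate G U) \<subseteq> generate G U" if "x \<in> N" for x
  proof -
    have xG: "x \<in> carrier G" using that NG by blast
    have "conjugates G {x} U \<subseteq> U" using stable that unfolding conjugates_eq_UN[of N] by blast
    then show ?thesis
      using conjugates_singleton_generate[OF xG UG] mono_generate by simp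
  qed
  then have "conjugates G N (generate G U) \<subseteq> generate G U"
    unfolding conjugates_eq_UN[of N] by blast
  then show ?thesis
    unfolding normal_in_def using generate_is_subgroup[OF UG] generate_subgroup_incl[OF U N] by blast
qed

lemma conjugates_normal_in:
  assumes N0: "subgroup N0 G" and N1: "normal_in G N1 N0" and P: "normal_in G P N1"
    and x: "x \<in> N0"
  shows "normal_in G (conjugates G {x} P) N1"
proof -
  have xG: "x \<in> carrier G" using x subgroup.subset[OF N0] by blast
  have P_N1: "P \<subseteq> N1" and N1G: "N1 \<subseteq> carrier G"
    using P N1 subgroup.subset[OF N0] unfolding normal_in_def by auto
  have "conjugates G {x} P \<subseteq> N1"
    using x P_N1 normal_inD[OF N1] unfolding conjugates_def by blast
  moreover have "y \<otimes> (x \<otimes> p \<otimes> inv x) \<otimes> inv y \<in> conjugates G {x} P" if y: "y \<in> N1" and p: "p \<in> P" for y p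
  proof -
    define z where "z = inv x \<otimes> y \<otimes> x"
    have "z \<in> N1"
      using normal_inD[OF N1 subgroup.m_inv_closed[OF N0 x] y] xG unfolding z_def by simp
    then have "z \<otimes> p \<otimes> inv z \<in> P" using normal_inD[OF P] p by blast
    moreover have "y \<in> carrier G" "p \<in> carrier G" using y p N1G P_N1 by auto
    then have "y \<otimes> (x \<otimes> p \<otimes> inv x) \<otimes> inv y = x \<otimes> (z \<otimes> p \<otimes> inv z) \<otimes> inv x"
      using xG unfolding z_def by (simp add: m_assoc inv_mult_group)
    ultimately show ?thesis unfolding conjugates_def by blast
  qed
  then have "conjugates G N1 (conjugates G {x} P) \<subseteq> conjugates G {x} P"
    unfolding conjugates_def[of G N1] by (auto simp: conjugates_def)
  ultimately show ?thesis
    using subgroup_conjugates_singleton[OF _ xG] P unfolding normal_in_def by blast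
qed

lemma normal_in_set_mult:
  assumes N: "subgroup N G" and A: "normal_in G A N" and B: "normal_in G B N"
  shows "normal_in G (A <#> B) N"
proof -
  have sA: "subgroup A G" and sB: "subgroup B G" and AN: "A \<subseteq> N" and BN: "B \<subseteq> N"
    using A B unfolding normal_in_def by auto
  have AG: "A \<subseteq> carrier G" and BG: "B \<subseteq> carrier G"
    using sA sB subgroup.subset by auto
  have "subgroup (A <#> B) G"
  proof (rule subgroupI)
    show "A <#> B \<subseteq> carrier G" using setmult_subset_G[OF AG BG] .
    have "\<one> \<otimes> \<one> \<in> A <#> B"
      using subgroup.one_closed[OF sA] subgroup.one_closed[OF sB] unfolding set_mult_def by blast
    then show "A <#> B \<noteq> {}" by blast
  next
    fix z assume "z \<in> A <#> B"
    then obtain a b where ab: "a \<in> A" "b \<in> B" "z = a \<otimes> b" unfolding set_mult_def by blast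
    have "a \<in> carrier G" "b \<in> carrier G" using ab AG BG by auto
    then have "inv z = inv a \<otimes> (a \<otimes> inv b \<otimes> inv a)"
      using ab(3) by (simp add: inv_mult_group m_assoc)
    moreover have "a \<otimes> inv b \<otimes> inv a \<in> B"
      using normal_inD[OF B _ subgroup.m_inv_closed[OF sB ab(2)]] ab(1) AN by blast
    ultimately show "inv z \<in> A <#> B"
      using subgroup.m_inv_closed[OF sA ab(1)] unfolding set_mult_def by blast
  next
    fix z w assume "z \<in> A <#> B" "w \<in> A <#> B"
    then obtain a b a' b' where ab: "a \<in> A" "b \<in> B" "z = a \<otimes> b" "a' \<in> A" "b' \<in> B" "w = a' \<otimes> b'"
      unfolding set_mult_def by blast
    have "a \<in> carrier G" "b \<in> carrier G" "a' \<in> carrier G" "b' \<in> carrier G"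
      using ab AG BG by auto
    then have "z \<otimes> w = (a \<otimes> a') \<otimes> (inv a' \<otimes> b \<otimes> inv (inv a') \<otimes> b')"
      using ab(3,6) by (simp add: m_assoc)
    moreover have "inv a' \<otimes> b \<otimes> inv (inv a') \<in> B"
      using normal_inD[OF B subgroup.m_inv_closed[OF N] ab(2)] ab(4) AN by blast
    ultimately show "z \<otimes> w \<in> A <#> B"
      using subgroup.m_closed[OF sA ab(1,4)] subgroup.m_closed[OF sB _ ab(5)]
      unfolding set_mult_def by blast
  qed
  moreover have "A <#> B \<subseteq> N"
    using AN BN subgroup.m_closed[OF N] unfolding set_mult_def by blast
  moreover have "x \<otimes> (a \<otimes> b) \<otimes> inv x \<in> A <#> B" if "x \<in> N" "a \<in> A" "b \<in> B" for x a b
  proof -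
    have "x \<in> carrier G" "a \<in> carrier G" "b \<in> carrier G"
      using that AG BG subgroup.subset[OF N] by auto
    then have "x \<otimes> (a \<otimes> b) \<otimes> inv x = (x \<otimes> a \<otimes> inv x) \<otimes> (x \<otimes> b \<otimes> inv x)"
      by (simp add: m_assoc)
    then show ?thesis
      using normal_inD[OF A that(1,2)] normal_inD[OF B that(1,3)] unfolding set_mult_def by blast
  qed
  then have "conjugates G N (A <#> B) \<subseteq> A <#> B"
    unfolding conjugates_def set_mult_def by blast
  ultimately show ?thesis unfolding normal_in_def by blast
qed

lemma nat_pow_mult_l_coset:
  assumes N: "subgroup N G" and B: "normal_in G B N" and a: "a \<in> N" and b: "b \<in> B"
  shows "(a \<otimes> b) [^] (k::nat) \<in> a [^] k <# B"
proof -
  have sB: "subgroup B G" and BG: "B \<subseteq> carrier G" and aG: "a \<in> carrier G"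
    using B subgroup.subset[OF N] a unfolding normal_in_def by (auto dest: subgroup.subset)
  show ?thesis
  proof (induction k)
    case 0
    have "(a \<otimes> b) [^] (0::nat) = a [^] (0::nat) \<otimes> \<one>" by simp
    then show ?case using subgroup.one_closed[OF sB] unfolding l_coset_def by blast
  next
    case (Suc k)
    then obtain c where c: "c \<in> B" "(a \<otimes> b) [^] k = a [^] k \<otimes> c"
      unfolding l_coset_def by blast
    have "inv a \<otimes> c \<otimes> a \<in> B"
      using normal_inD[OF B subgroup.m_inv_closed[OF N a] c(1)] aG by simp
    then have "inv a \<otimes> c \<otimes> a \<otimes> b \<in> B" using b subgroup.m_closed[OF sB] by blast
    moreover have "c \<in> carrier G" "b \<in> carrier G" using c(1) b BG by auto
    then have "(a \<otimes> b) [^] Suc k = a [^] Suc k \<otimes> (inv a \<otimes> c \<otimes> a \<otimes> b)"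
      using c(2) aG by (simp add: m_assoc)
    ultimately show ?case unfolding l_coset_def by blast
  qed
qed

lemma set_mult_torsion:
  assumes N: "subgroup N G" and A: "A \<subseteq> N" and B: "normal_in G B N"
    and A_tor: "A \<subseteq> torsion_elements G" and B_tor: "B \<subseteq> torsion_elements G"
  shows "A <#> B \<subseteq> torsion_elements G"
proof
  fix z assume "z \<in> A <#> B"
  then obtain a b where ab: "a \<in> A" "b \<in> B" "z = a \<otimes> b" unfolding set_mult_def by blast
  have aN: "a \<in> N" using A ab(1) by blast
  obtain n :: nat where n: "n > 0" "a [^] n = \<one>"
    using A_tor ab(1) unfolding torsion_elements_def by blast
  have BG: "B \<subseteq> carrier G" using B subgroup.subset unfolding normal_in_def by blast
  then have "z [^] n \<in> B"
    using nat_pow_mult_l_coset[OF N B aN ab(2), of n] ab(3) n(2) unfolding l_coset_def by auto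
  then obtain m :: nat where m: "m > 0" "(z [^] n) [^] m = \<one>"
    using B_tor unfolding torsion_elements_def by blast
  have zG: "z \<in> carrier G"
    using ab aN BG subgroup.subset[OF N] by blast
  then have "z [^] (n * m) = \<one>" using m(2) by (simp add: nat_pow_pow)
  then show "z \<in> torsion_elements G"
    using n(1) m(1) zG unfolding torsion_elements_def by (auto intro!: exI[of _ "n * m"])
qed

lemma generate_normal_torsion_family:
  assumes N: "subgroup N G" and F: "\<And>A. A \<in> F \<Longrightarrow> normal_in G A N \<and> A \<subseteq> torsion_elements G"
  shows "generate G (\<Union>F) \<subseteq> torsion_elements G"
proof
  fix x assume "x \<in> generate G (\<Union>F)"
  then have "\<exists>A. normal_in G A N \<and> A \<subseteq> torsion_elements G \<and> x \<in> A"
  proof (induction rule: generate.induct)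
    case one
    then show ?case using normal_in_trivial[OF N] one_torsion by blast
  next
    case (incl h)
    then show ?case using F by blast
  next
    case (inv h)
    then obtain A where "A \<in> F" "h \<in> A" by blast
    then show ?case using F subgroup.m_inv_closed unfolding normal_in_def by metis
  next
    case (eng h1 h2)
    then obtain A B where A: "normal_in G A N" "A \<subseteq> torsion_elements G" "h1 \<in> A"
      and B: "normal_in G B N" "B \<subseteq> torsion_elements G" "h2 \<in> B"
      by blast
    have "h1 \<otimes> h2 \<in> A <#> B" using A(3) B(3) unfolding set_mult_def by blast
    then show ?case
      using normal_in_set_mult[OF N A(1) B(1)] set_mult_torsion[OF N _ B(1) A(2) B(2)] A(1)
      unfolding normal_in_def by blast
  qed
  then show "x \<in> torsion_elements G" by blast
qed

lemma normal_in_conjugates_torsion: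
  assumes N0: "subgroup N0 G" and N1: "normal_in G N1 N0" and P: "normal_in G P N1"
    and P_tor: "P \<subseteq> torsion_elements G"
  shows "generate G (conjugates G N0 P) \<subseteq> torsion_elements G"
  unfolding conjugates_eq_UN[of N0]
proof (rule generate_normal_torsion_family)
  show "subgroup N1 G" using N1 unfolding normal_in_def by blast
next
  fix A assume "A \<in> (\<lambda>x. conjugates G {x} P) ` N0"
  then obtain x where x: "x \<in> N0" "A = conjugates G {x} P" by blast
  then have "{x} \<subseteq> carrier G" using subgroup.subset[OF N0] by blast
  then show "normal_in G A N1 \<and> A \<subseteq> torsion_elements G"
    using conjugates_normal_in[OF N0 N1 P x(1)] conjugates_torsion[OF _ P_tor] x(2) by blast
qed

lemma subnormal_series_conjugates_torsion:
  assumes "subgroup (N 0) G" and "\<forall>i<c. normal_in G (N (Suc i)) (N i)"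
    and "N c \<subseteq> torsion_elements G"
  shows "generate G (conjugates G (N 0) (N c)) \<subseteq> torsion_elements G"
  using assms
proof (induction c arbitrary: N)
  case 0
  have "generate G (conjugates G (N 0) (N 0)) \<subseteq> N 0"
    using 0(1) by (intro generate_subgroup_incl conjugates_subgroup_subset) auto
  then show ?case using 0(3) by simp
next
  case (Suc c)
  define H where "H = N (Suc c)"
  define P where "P = generate G (conjugates G (N (Suc 0)) H)"
  have N1: "normal_in G (N (Suc 0)) (N 0)" using Suc.prems(2) by simp
  then have sN1: "subgroup (N (Suc 0)) G" unfolding normal_in_def by blast
  have series: "\<forall>i<c. normal_in G (N (Suc (Suc i))) (N (Suc i))" using Suc.prems(2) by simp
  then have "\<forall>i<c. N (Suc (Suc i)) \<subseteq> N (Suc i)" unfolding normal_in_def by blast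
  then have H_N1: "H \<subseteq> N (Suc 0)"
    using decreasing_chain_subset[of c "\<lambda>i. N (Suc i)"] unfolding H_def by blast
  then have HG: "H \<subseteq> carrier G" using subgroup.subset[OF sN1] by blast
  have P_N1: "normal_in G P (N (Suc 0))"
    unfolding P_def
    by (intro generate_normal_in sN1 conjugates_subgroup_subset[OF sN1 _ H_N1]
        conjugates_conjugates_subset[OF sN1 HG]) simp
  have P_tor: "P \<subseteq> torsion_elements G"
    using Suc.IH[of "\<lambda>i. N (Suc i)", OF sN1 series] Suc.prems(3) unfolding P_def H_def by blast
  have "H \<subseteq> P"
    using subset_conjugates[OF subgroup.one_closed[OF sN1] HG] unfolding P_def
    by (auto intro: generate.incl)
  then have "generate G (conjugates G (N 0) H) \<subseteq> generate G (conjugates G (N 0) P)"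
    unfolding conjugates_def by (intro mono_generate) blast
  also have "\<dots> \<subseteq> torsion_elements G"
    using normal_in_conjugates_torsion[OF Suc.prems(1) N1 P_N1 P_tor] .
  finally show ?case unfolding H_def .
qed

lemma lower_central_normal: "lower_central G i \<lhd> G"
proof (induction i)
  case 0
  show ?case by (simp add: normal_invI subgroup_self)
next
  case (Suc i)
  let ?S = "{h \<otimes> k \<otimes> inv h \<otimes> inv k | h k. h \<in> lower_central G i \<and> k \<in> carrier G}"
  have LG: "lower_central G i \<subseteq> carrier G"
    using Suc normal_imp_subgroup subgroup.subset by blast
  have "generate G ?S \<lhd> G"
  proof (rule normal_generateI)
    show "?S \<subseteq> carrier G" using LG by auto
  next
    fix u g assume "u \<in> ?S" and g: "g \<in> carrier G"
    then obtain h k where hk: "h \<in> lower_central G i" "k \<in> carrier G" "u = h \<otimes> k \<otimes> inv h \<otimes> inv k"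
      by blast
    have "h \<in> carrier G" using hk(1) LG by blast
    then have "g \<otimes> u \<otimes> inv g =
        (g \<otimes> h \<otimes> inv g) \<otimes> (g \<otimes> k \<otimes> inv g) \<otimes> inv (g \<otimes> h \<otimes> inv g) \<otimes> inv (g \<otimes> k \<otimes> inv g)"
      using hk g by (simp add: m_assoc inv_mult_group)
    moreover have "g \<otimes> h \<otimes> inv g \<in> lower_central G i" using normal_invE(2)[OF Suc g hk(1)] .
    ultimately show "g \<otimes> u \<otimes> inv g \<in> ?S" using g hk(2) by blast
  qed
  then show ?case by (simp add: commutator_subgroup_def)
qed

lemma lower_central_subgroup: "subgroup (lower_central G i) G"
  using lower_central_normal normal_imp_subgroup by blast

lemma lower_central_commutator:
  "c \<in> lower_central G i \<Longrightarrow> k \<in> carrier G \<Longrightarrow> c \<otimes> k \<otimes> inv c \<otimes> inv k \<in> lower_central G (Suc i)"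
  unfolding lower_central.simps commutator_subgroup_def by (rule generate.incl) blast

lemma lower_central_Suc_subset: "lower_central G (Suc i) \<subseteq> lower_central G i"
proof -
  have "c \<otimes> k \<otimes> inv c \<otimes> inv k \<in> lower_central G i"
    if c: "c \<in> lower_central G i" and k: "k \<in> carrier G" for c k
  proof -
    have "c \<in> carrier G" using c subgroup.subset[OF lower_central_subgroup] by blast
    then have "c \<otimes> k \<otimes> inv c \<otimes> inv k = c \<otimes> (k \<otimes> inv c \<otimes> inv k)" using k by (simp add: m_assoc)
    moreover have "k \<otimes> inv c \<otimes> inv k \<in> lower_central G i"
      using normal_invE(2)[OF lower_central_normal k subgroup.m_inv_closed[OF lower_central_subgroup c]] .
    ultimately show ?thesis using subgroup.m_closed[OF lower_central_subgroup c] by simp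
  qed
  then show ?thesis
    unfolding lower_central.simps commutator_subgroup_def
    by (intro generate_subgroup_incl lower_central_subgroup) blast
qed

lemma lower_central_set_mult_normal_in:
  assumes H: "subgroup H G"
  shows "normal_in G (lower_central G (Suc i) <#> H) (lower_central G i <#> H)"
proof -
  let ?L = "lower_central G i" and ?L' = "lower_central G (Suc i)"
  have HG: "H \<subseteq> carrier G" using subgroup.subset[OF H] .
  have LG: "?L \<subseteq> carrier G" and L'G: "?L' \<subseteq> carrier G"
    using subgroup.subset[OF lower_central_subgroup] by blast+
  have "x \<otimes> y \<otimes> inv x \<in> ?L' <#> H" if x: "x \<in> ?L <#> H" and y: "y \<in> ?L' <#> H" for x y
  proof -
    obtain c h where c: "c \<in> ?L" "h \<in> H" "x = c \<otimes> h" using x unfolding set_mult_def by blast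
    obtain d h' where d: "d \<in> ?L'" "h' \<in> H" "y = d \<otimes> h'" using y unfolding set_mult_def by blast
    have carr: "c \<in> carrier G" "h \<in> carrier G" "d \<in> carrier G" "h' \<in> carrier G"
      using c d HG LG L'G by blast+
    define e where "e = h \<otimes> d \<otimes> inv h"
    define k where "k = h \<otimes> h' \<otimes> inv h"
    have k: "k \<in> H"
      unfolding k_def using c(2) d(2) by (intro subgroup.m_closed[OF H] subgroup.m_inv_closed[OF H])
    have "e \<in> ?L'" unfolding e_def using normal_invE(2)[OF lower_central_normal carr(2) d(1)] .
    then have "c \<otimes> e \<otimes> inv c \<in> ?L'" using normal_invE(2)[OF lower_central_normal carr(1)] by blast
    moreover have "c \<otimes> k \<otimes> inv c \<otimes> inv k \<in> ?L'"
      using lower_central_commutator[OF c(1)] k HG by blast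
    ultimately have "(c \<otimes> e \<otimes> inv c) \<otimes> (c \<otimes> k \<otimes> inv c \<otimes> inv k) \<in> ?L'"
      using subgroup.m_closed[OF lower_central_subgroup] by blast
    moreover have "x \<otimes> y \<otimes> inv x = (c \<otimes> e \<otimes> inv c) \<otimes> (c \<otimes> k \<otimes> inv c \<otimes> inv k) \<otimes> k"
      unfolding e_def k_def using c(3) d(3) carr by (simp add: m_assoc inv_mult_group)
    ultimately show ?thesis using k unfolding set_mult_def by blast
  qed
  then have "conjugates G (?L <#> H) (?L' <#> H) \<subseteq> ?L' <#> H"
    unfolding conjugates_def by blast
  moreover have "?L' <#> H \<subseteq> ?L <#> H"
    using lower_central_Suc_subset by (rule mono_set_mult) simp
  ultimately show ?thesis
    unfolding normal_in_def using mult_norm_subgroup[OF lower_central_normal H] by blast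
qed

lemma nilpotent_conjugates_torsion:
  assumes nil: "nilpotent_group G" and H: "subgroup H G" and H_tor: "H \<subseteq> torsion_elements G"
  shows "generate G (conjugates G (carrier G) H) \<subseteq> torsion_elements G"
proof -
  obtain m where m: "lower_central G m = {\<one>}" using nil unfolding nilpotent_group_def by blast
  define N where "N i = lower_central G i <#> H" for i
  have "N 0 = carrier G" unfolding N_def using set_mult_carrier_idem[OF H] by simp
  moreover have "N m = H"
    unfolding N_def m using lcos_mult_one[OF subgroup.subset[OF H]] by (simp add: l_coset_eq_set_mult)
  moreover have "\<forall>i<m. normal_in G (N (Suc i)) (N i)"
    unfolding N_def using lower_central_set_mult_normal_in[OF H] by blast
  ultimately show ?thesis
    using subnormal_series_conjugates_torsion[of N m] subgroup_self H_tor by simp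
qed

lemma nilpotent_torsion_mult:
  assumes nil: "nilpotent_group G"
    and x: "x \<in> torsion_elements G" and y: "y \<in> torsion_elements G"
  shows "x \<otimes> y \<in> torsion_elements G"
proof -
  define C where "C z = generate G (conjugates G (carrier G) (carrier (subgroup_generated G {z})))" for z
  have C: "normal_in G (C z) (carrier G) \<and> C z \<subseteq> torsion_elements G \<and> z \<in> C z"
    if z: "z \<in> torsion_elements G" for z
  proof -
    let ?Z = "carrier (subgroup_generated G {z})"
    have zG: "z \<in> carrier G" using z unfolding torsion_elements_def by blast
    have sZ: "subgroup ?Z G" by (rule subgroup_subgroup_generated)
    then have ZG: "?Z \<subseteq> carrier G" by (rule subgroup.subset)
    have "normal_in G (C z) (carrier G)"
      unfolding C_def
      by (intro generate_normal_in subgroup_self conjugates_subset_carrier ZG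
          conjugates_conjugates_subset) simp
    moreover have "C z \<subseteq> torsion_elements G"
      unfolding C_def using nilpotent_conjugates_torsion[OF nil sZ cyclic_subgroup_torsion[OF z]] .
    moreover have "z \<in> C z"
      using subgroup_generated_subset_carrier_subset[of "{z}"] zG subset_conjugates[OF _ ZG]
      unfolding C_def by (auto intro: generate.incl)
    ultimately show ?thesis by blast
  qed
  have "generate G (\<Union>{C x, C y}) \<subseteq> torsion_elements G"
    using C[OF x] C[OF y] by (intro generate_normal_torsion_family[OF subgroup_self]) blast
  moreover have "x \<otimes> y \<in> generate G (\<Union>{C x, C y})"
    using C[OF x] C[OF y] by (auto intro: generate.eng generate.incl)
  ultimately show ?thesis by blast
qed

lemma torsion_elements_subgroup_generated:
  "torsion_elements (subgroup_generated G S) = torsion_elements G \<inter> carrier (subgroup_generated G S)"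
  using subgroup.subset[OF subgroup_subgroup_generated]
  unfolding torsion_elements_def by (auto simp: pow_subgroup_generated)

lemma locally_nilpotent_torsion_normal:
  assumes ln: "locally_nilpotent G"
  shows "torsion_elements G \<lhd> G"
proof (rule normal_invI)
  show "subgroup (torsion_elements G) G"
  proof (rule subgroupI)
    show "torsion_elements G \<subseteq> carrier G" unfolding torsion_elements_def by blast
    show "torsion_elements G \<noteq> {}" using one_torsion by blast
  next
    fix x assume "x \<in> torsion_elements G"
    then obtain n :: nat where "x \<in> carrier G" "n > 0" "x [^] n = \<one>"
      unfolding torsion_elements_def by blast
    then show "inv x \<in> torsion_elements G"
      unfolding torsion_elements_def by (auto simp: nat_pow_inv)
  next
    fix x y assume x: "x \<in> torsion_elements G" and y: "y \<in> torsion_elements G"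
    define K where "K = subgroup_generated G {x, y}"
    have xy: "{x, y} \<subseteq> carrier G" using x y unfolding torsion_elements_def by blast
    then have "nilpotent_group K"
      using ln unfolding locally_nilpotent_def K_def by simp
    moreover have "{x, y} \<subseteq> carrier K"
      unfolding K_def using subgroup_generated_subset_carrier_subset[OF xy] .
    then have "x \<in> torsion_elements K" "y \<in> torsion_elements K"
      using x y unfolding K_def torsion_elements_subgroup_generated by auto
    ultimately have "x \<otimes>\<^bsub>K\<^esub> y \<in> torsion_elements K"
      using group.nilpotent_torsion_mult[OF group_subgroup_generated] unfolding K_def by blast
    then show "x \<otimes> y \<in> torsion_elements G"
      unfolding K_def torsion_elements_subgroup_generated by simp
  qed
next
  fix g x assume "g \<in> carrier G" "x \<in> torsion_elements G"
  then show "g \<otimes> x \<otimes> inv g \<in> torsion_elements G"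
    using conjugates_torsion[of "{g}" "{x}"] unfolding conjugates_def by blast
qed

end

theorem lemma3p5:
  fixes G :: "('a, 'b) monoid_scheme"
  assumes "group G"
    and "locally_nilpotent G"
    and "\<not> periodic_group G"
  shows "\<not> (\<exists>H. subgroup H G \<and> finite H \<and> contranormal H G)"
proof
  assume "\<exists>H. subgroup H G \<and> finite H \<and> contranormal H G"
  then obtain H where H: "subgroup H G" "finite H" "normal_closure G H = carrier G"
    unfolding contranormal_def by blast
  have "H \<subseteq> torsion_elements G"
    using group.finite_subgroup_torsion[OF assms(1) H(1,2)] .
  moreover have "torsion_elements G \<lhd> G"
    using group.locally_nilpotent_torsion_normal[OF assms(1,2)] .
  ultimately have "normal_closure G H \<subseteq> torsion_elements G"
    unfolding normal_closure_def by blast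
  then have "periodic_group G"
    using H(3) unfolding periodic_group_def torsion_elements_def by blast
  with assms(3) show False by contradiction
qed

end
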